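(* For all integers $m\ge2$ and $p\ge1$, $$E\,|C_m(p;\mathbf U_1)-C_m(p-1;\mathbf U_1)|\le 2+16m.$$
   Context: Let $U_1,U_2,\ldots$ be i.i.d. uniform random variables on $[0,1]$ and $\mathbf U_k=(U_k,U_{k+1},\ldots)$ for $k\ge1$. For integers $m\ge1$, $n\ge0$, $k\ge1$, define $C_m(n;\mathbf U_k)$ recursively (in $n$) by $C_m(n;\mathbf U_k)=0$ for $0\le n\le m-1$, and for $n\ge m$, writing $V=\lfloor nU_k\rfloor$, $$C_m(n;\mathbf U_k)=n-1+C_m(V;\mathbf U_{k+1})+C_{m-1-V}(n-1-V;\mathbf U_{k+1})\,\mathbf 1(V<m-1).$$ (This is the number of comparisons made by Quickselect to find the $m$-th smallest of $n$ distinct numbers.) *)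

theory Defs
  imports "HOL-Probability.Probability"
begin

text \<open>Pivot rank V = floor(n U_k), clamped to n-1 (only matters on the null event U_k = 1,
  which is needed for the recursion to be well-founded).  The sequence u encodes
  (U_k, U_{k+1}, ...) with u 0 = U_k.\<close>
definition qs_pivot :: "nat \<Rightarrow> (nat \<Rightarrow> real) \<Rightarrow> nat" where
  "qs_pivot n u = min (nat \<lfloor>real n * u 0\<rfloor>) (n - 1)"

lemma qs_pivot_le: "qs_pivot n u \<le> n - 1"
  by (simp add: qs_pivot_def)

text \<open>Number of comparisons of Quickselect: qsel_cmp m n u = C_m(n; U_k) where u = U_k.
  For m = 0 (not used by the paper) the value is set to 0.\<close>
function qsel_cmp :: "nat \<Rightarrow> nat \<Rightarrow> (nat \<Rightarrow> real) \<Rightarrow> nat" where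
  "qsel_cmp m n u =
     (if n < m \<or> m = 0 then 0
      else n - 1 + qsel_cmp m (qs_pivot n u) (\<lambda>i. u (Suc i))
           + (if qs_pivot n u < m - 1
              then qsel_cmp (m - 1 - qs_pivot n u) (n - 1 - qs_pivot n u) (\<lambda>i. u (Suc i))
              else 0))"
  by pat_completeness auto
termination
  by (relation "Wellfounded.measure (\<lambda>(m, n, u). n)")
     (auto, (metis qs_pivot_le diff_less le_less_trans less_one not_le not_gr0 le_zero_eq)+)

definition unif_seq :: "(nat \<Rightarrow> real) measure" where
  "unif_seq = (\<Pi>\<^sub>M i\<in>UNIV. uniform_measure lborel {0..1})"

end

theory Submission
  imports Defs
begin

text \<open>Condition on the first uniform x. The pivot ranks of p and p - 1 keys, essentially
  \<lfloor>p x\<rfloor> and \<lfloor>(p - 1) x\<rfloor>, coincide except on an interval of length v / (p (p - 1))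
  for each rank v, where the second one is v - 1. For equal ranks v the two costs differ by 1 plus,
  when v < m - 1, the cost difference of the instance (m - 1 - v, p - 1 - v); for shifted ranks
  they differ by 1 plus either the cost difference of the instance (m, v) when v \<ge> m, or else by
  at most two costs of instances with p - 1 - v keys, whose expectations are at most
  4 (p - 1 - v) by the same conditioning applied to E C_j(N) \<le> 4 N. Induction on p and an
  elementary summation give 2 + 16 m.\<close>

declare qsel_cmp.simps[simp del]

section \<open>The i.i.d. uniform sequence\<close>

abbreviation uniform_unit :: "real measure" where
  "uniform_unit \<equiv> uniform_measure lborel {0..1}"

lemma prob_space_uniform_unit: "prob_space uniform_unit"
  by (intro prob_space_uniform_measure) auto

lemma (in prob_space) nn_integral_PiM_case_nat:
  assumes [measurable]: "f \<in> borel_measurable (\<Pi>\<^sub>M i\<in>UNIV::nat set. M)"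
  shows "(\<integral>\<^sup>+X. f X \<partial>(\<Pi>\<^sub>M i\<in>UNIV. M)) = (\<integral>\<^sup>+x. \<integral>\<^sup>+X. f (case_nat x X) \<partial>(\<Pi>\<^sub>M i\<in>UNIV. M) \<partial>M)"
proof -
  interpret S: sequence_space M ..
  interpret P: pair_sigma_finite M S.S ..
  have "(\<integral>\<^sup>+X. f X \<partial>S.S) = (\<integral>\<^sup>+X. f ((\<lambda>(s, \<omega>). case_nat s \<omega>) X) \<partial>(M \<Otimes>\<^sub>M S.S))"
    by (subst S.PiM_iter[symmetric]) (simp add: nn_integral_distr)
  also have "\<dots> = (\<integral>\<^sup>+x. \<integral>\<^sup>+X. f (case_nat x X) \<partial>S.S \<partial>M)"
    by (subst S.nn_integral_fst[symmetric]) (simp_all add: split_beta')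
  finally show ?thesis .
qed

lemma prob_space_unif_seq: "prob_space unif_seq"
proof -
  interpret prob_space uniform_unit by (rule prob_space_uniform_unit)
  interpret sequence_space uniform_unit ..
  show ?thesis unfolding unif_seq_def by (rule P.prob_space_axioms)
qed

lemma nn_integral_unif_seq_case_nat:
  "f \<in> borel_measurable unif_seq \<Longrightarrow>
    (\<integral>\<^sup>+u. f u \<partial>unif_seq) = (\<integral>\<^sup>+x. \<integral>\<^sup>+w. f (case_nat x w) \<partial>unif_seq \<partial>uniform_unit)"
  unfolding unif_seq_def by (rule prob_space.nn_integral_PiM_case_nat[OF prob_space_uniform_unit])

section \<open>Quickselect after the first pivot\<close>

definition qsel_cmp_pivot :: "nat \<Rightarrow> nat \<Rightarrow> nat \<Rightarrow> (nat \<Rightarrow> real) \<Rightarrow> nat" where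
  "qsel_cmp_pivot m n v w =
     n - 1 + qsel_cmp m v w + (if v < m - 1 then qsel_cmp (m - 1 - v) (n - 1 - v) w else 0)"

lemma qsel_cmp_eq_pivot:
  "qsel_cmp m n u =
     (if n < m \<or> m = 0 then 0 else qsel_cmp_pivot m n (qs_pivot n u) (\<lambda>i. u (Suc i)))"
  by (subst qsel_cmp.simps) (simp add: qsel_cmp_pivot_def)

lemma qsel_cmp_trivial: "n < m \<or> m = 0 \<Longrightarrow> qsel_cmp m n u = 0"
  by (simp add: qsel_cmp_eq_pivot)

lemma measurable_qs_pivot[measurable]: "qs_pivot n \<in> unif_seq \<rightarrow>\<^sub>M count_space UNIV"
  unfolding qs_pivot_def unif_seq_def by measurable

lemma measurable_shift_unif_seq[measurable]: "(\<lambda>u i. u (Suc i)) \<in> unif_seq \<rightarrow>\<^sub>M unif_seq"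
  unfolding unif_seq_def by (rule measurable_PiM_single') (auto simp: space_PiM)

lemma measurable_qsel_cmp[measurable]: "qsel_cmp m n \<in> unif_seq \<rightarrow>\<^sub>M count_space UNIV"
proof (induction n arbitrary: m rule: less_induct)
  case (less n)
  show ?case
  proof (cases "n < m \<or> m = 0")
    case True
    then show ?thesis by (simp add: qsel_cmp_trivial)
  next
    case False
    have "(\<lambda>u. qsel_cmp_pivot m n (min v (n - 1)) (\<lambda>i. u (Suc i)))
            \<in> unif_seq \<rightarrow>\<^sub>M count_space UNIV" for v
    proof -
      have [measurable]: "qsel_cmp j (min v (n - 1)) \<in> unif_seq \<rightarrow>\<^sub>M count_space UNIV"
        "qsel_cmp j (n - 1 - min v (n - 1)) \<in> unif_seq \<rightarrow>\<^sub>M count_space UNIV" for j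
        using False by (auto intro: less)
      show ?thesis unfolding qsel_cmp_pivot_def by measurable
    qed
    \<comment> \<open>Clamping with min is harmless since qs_pivot n u \<le> n - 1, and it keeps every
      recursive call at a size below n, as the induction hypothesis requires.\<close>
    then have "(\<lambda>u. qsel_cmp_pivot m n (min (qs_pivot n u) (n - 1)) (\<lambda>i. u (Suc i)))
                 \<in> unif_seq \<rightarrow>\<^sub>M count_space UNIV"
      by (rule measurable_compose_countable) measurable
    then show ?thesis
      using False qs_pivot_le[of n] by (simp add: qsel_cmp_eq_pivot[abs_def] min_absorb1)
  qed
qed

definition pivot_rank :: "nat \<Rightarrow> real \<Rightarrow> nat" where
  "pivot_rank n x = min (nat \<lfloor>real n * x\<rfloor>) (n - 1)"

lemma qsel_cmp_case_nat:
  assumes "1 \<le> m" "m \<le> n"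
  shows "qsel_cmp m n (case_nat x w) = qsel_cmp_pivot m n (pivot_rank n x) w"
proof -
  have "qs_pivot n (case_nat x w) = pivot_rank n x"
    by (simp add: qs_pivot_def pivot_rank_def)
  then show ?thesis
    using assms by (simp add: qsel_cmp_eq_pivot)
qed

lemma pivot_rank_less: "1 \<le> n \<Longrightarrow> pivot_rank n x < n"
  by (simp add: pivot_rank_def)

lemma pivot_rank_bounds:
  assumes "0 \<le> x" "x \<le> 1" "1 \<le> n"
  shows "real (pivot_rank n x) \<le> real n * x" "real n * x \<le> real (pivot_rank n x) + 1"
proof -
  let ?k = "nat \<lfloor>real n * x\<rfloor>"
  have k: "real ?k \<le> real n * x" "real n * x < real ?k + 1"
    using floor_correct[of "real n * x"] assms by auto
  have nx: "real n * x \<le> real n"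
    using assms by (simp add: mult_left_le)
  have "real (pivot_rank n x) = real ?k \<or> real (pivot_rank n x) = real n - 1 \<and> real n \<le> real ?k"
    using assms by (auto simp: pivot_rank_def min_def)
  then show "real (pivot_rank n x) \<le> real n * x" "real n * x \<le> real (pivot_rank n x) + 1"
    using k nx by (elim disjE; linarith)+
qed

lemma pivot_rank_pred_cases:
  assumes "0 \<le> x" "x \<le> 1" "2 \<le> n"
  shows "pivot_rank (n - 1) x = pivot_rank n x \<or>
         1 \<le> pivot_rank n x \<and> pivot_rank (n - 1) x = pivot_rank n x - 1"
proof -
  define a where "a = nat \<lfloor>real n * x\<rfloor>"
  define b where "b = nat \<lfloor>real (n - 1) * x\<rfloor>"
  have shift: "real (n - 1) * x = real n * x - x"
    using assms by (simp add: algebra_simps)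
  have "\<lfloor>real (n - 1) * x\<rfloor> \<le> \<lfloor>real n * x\<rfloor>"
    using assms shift by (intro floor_mono) linarith
  moreover have "\<lfloor>real n * x\<rfloor> \<le> \<lfloor>real (n - 1) * x + 1\<rfloor>"
    using assms shift by (intro floor_mono) linarith
  moreover have "\<lfloor>real n * x\<rfloor> \<le> \<lfloor>real n\<rfloor>"
    using assms by (intro floor_mono) (simp add: mult_left_le)
  ultimately have "b \<le> a" "a \<le> b + 1" "a \<le> n"
    unfolding a_def b_def by auto
  then show ?thesis
    using assms unfolding pivot_rank_def a_def[symmetric] b_def[symmetric] by linarith
qed

section \<open>Distribution of the pivot ranks\<close>

lemma emeasure_uniform_unit_Icc_le: "a \<le> b \<Longrightarrow> emeasure uniform_unit {a..b} \<le> ennreal (b - a)"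
proof -
  assume "a \<le> b"
  have "emeasure uniform_unit {a..b} = emeasure lborel ({0..1} \<inter> {a..b})"
    by (simp add: divide_ennreal_def)
  also have "\<dots> \<le> emeasure lborel {a..b}"
    by (intro emeasure_mono) auto
  finally show ?thesis
    using \<open>a \<le> b\<close> by simp
qed

lemma nn_integral_uniform_unit_step_le:
  assumes "finite I" "\<And>i. i \<in> I \<Longrightarrow> a i \<le> b i"
  shows "(\<integral>\<^sup>+x. (\<Sum>i\<in>I. c i * indicator {a i..b i} x) \<partial>uniform_unit)
           \<le> (\<Sum>i\<in>I. ennreal (b i - a i) * c i)"
proof -
  have "(\<integral>\<^sup>+x. (\<Sum>i\<in>I. c i * indicator {a i..b i} x) \<partial>uniform_unit)
          = (\<Sum>i\<in>I. c i * emeasure uniform_unit {a i..b i})"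
    using assms by (subst nn_integral_sum) (auto simp: nn_integral_cmult_indicator)
  also have "\<dots> \<le> (\<Sum>i\<in>I. ennreal (b i - a i) * c i)"
    using assms emeasure_uniform_unit_Icc_le
    by (intro sum_mono) (simp add: mult.commute mult_left_mono)
  finally show ?thesis .
qed

lemma nn_integral_pivot_rank_le:
  assumes "1 \<le> n"
  shows "(\<integral>\<^sup>+x. h (pivot_rank n x) \<partial>uniform_unit) \<le> (\<Sum>v<n. ennreal (1 / real n) * h v)"
proof -
  have "(\<integral>\<^sup>+x. h (pivot_rank n x) \<partial>uniform_unit)
          \<le> (\<integral>\<^sup>+x. (\<Sum>v<n. h v * indicator {real v / n..(real v + 1) / n} x) \<partial>uniform_unit)"
  proof (intro nn_integral_mono_AE AE_uniform_measureI AE_I2 impI)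
    fix x :: real
    assume "x \<in> {0..1}"
    then have "x \<in> {real (pivot_rank n x) / n..(real (pivot_rank n x) + 1) / n}"
      using pivot_rank_bounds[of x n] assms by (auto simp: field_simps)
    then show "h (pivot_rank n x) \<le> (\<Sum>v<n. h v * indicator {real v / n..(real v + 1) / n} x)"
      using pivot_rank_less[OF assms]
      by (intro order_trans[OF _ member_le_sum[of "pivot_rank n x"]]) auto
  qed simp
  also have "\<dots> \<le> (\<Sum>v<n. ennreal ((real v + 1) / n - real v / n) * h v)"
    by (rule nn_integral_uniform_unit_step_le) (auto simp: divide_right_mono)
  finally show ?thesis
    by (simp add: diff_divide_distrib[symmetric])
qed

text \<open>With v the rank for n keys, the rank for n - 1 keys is v on [v / (n - 1), (v + 1) / n]
  and v - 1 on [v / n, v / (n - 1)].\<close>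

lemma nn_integral_pivot_rank_pair_le:
  assumes "2 \<le> n"
  shows "(\<integral>\<^sup>+x. h (pivot_rank n x) (pivot_rank (n - 1) x) \<partial>uniform_unit)
           \<le> (\<Sum>v<n. ennreal ((real n - 1 - real v) / (real n * (real n - 1))) * h v v
                    + ennreal (real v / (real n * (real n - 1))) * h v (v - 1))"
proof -
  define I0 where "I0 v = {real v / (n - 1)..(real v + 1) / n}" for v
  define I1 where "I1 v = {real v / n..real v / (n - 1)}" for v
  have n: "1 < real n" "real (n - 1) = real n - 1"
    using assms by auto
  have "(\<integral>\<^sup>+x. h (pivot_rank n x) (pivot_rank (n - 1) x) \<partial>uniform_unit)
          \<le> (\<integral>\<^sup>+x. (\<Sum>v<n. h v v * indicator (I0 v) x) + (\<Sum>v<n. h v (v - 1) * indicator (I1 v) x)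
                 \<partial>uniform_unit)"
  proof (intro nn_integral_mono_AE AE_uniform_measureI AE_I2 impI)
    fix x :: real
    assume x: "x \<in> {0..1}"
    let ?v = "pivot_rank n x" and ?w = "pivot_rank (n - 1) x"
    have "real ?v \<le> real n * x" "real n * x \<le> real ?v + 1"
      "real ?w \<le> (real n - 1) * x" "(real n - 1) * x \<le> real ?w + 1"
      using pivot_rank_bounds[of x n] pivot_rank_bounds[of x "n - 1"] x assms n by auto
    then have ranks: "?w = ?v \<and> x \<in> I0 ?v \<or> ?w = ?v - 1 \<and> x \<in> I1 ?v"
      using pivot_rank_pred_cases[of x n] x assms n
      by (auto simp: I0_def I1_def field_simps)
    have "?v \<in> {..<n}"
      using assms pivot_rank_less[of n x] by simp
    then have S0: "h ?v ?v * indicator (I0 ?v) x \<le> (\<Sum>v<n. h v v * indicator (I0 v) x)"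
      by (intro member_le_sum) simp_all
    have S1: "h ?v (?v - 1) * indicator (I1 ?v) x \<le> (\<Sum>v<n. h v (v - 1) * indicator (I1 v) x)"
      using \<open>?v \<in> {..<n}\<close>
      by (intro member_le_sum[where f = "\<lambda>v. h v (v - 1) * indicator (I1 v) x"]) simp_all
    from ranks show "h ?v ?w \<le> (\<Sum>v<n. h v v * indicator (I0 v) x)
                                 + (\<Sum>v<n. h v (v - 1) * indicator (I1 v) x)"
    proof (elim disjE conjE)
      assume "?w = ?v" "x \<in> I0 ?v"
      then show ?thesis
        using S0 by (simp add: add_increasing2)
    next
      assume "?w = ?v - 1" "x \<in> I1 ?v"
      then show ?thesis
        using S1 by (simp add: add_increasing)
    qed
  qed simp
  also have "\<dots> = (\<integral>\<^sup>+x. (\<Sum>v<n. h v v * indicator (I0 v) x) \<partial>uniform_unit)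
                   + (\<integral>\<^sup>+x. (\<Sum>v<n. h v (v - 1) * indicator (I1 v) x) \<partial>uniform_unit)"
    unfolding I0_def I1_def by (rule nn_integral_add) measurable
  also have "\<dots> \<le> (\<Sum>v<n. ennreal ((real v + 1) / n - real v / (n - 1)) * h v v)
                   + (\<Sum>v<n. ennreal (real v / (n - 1) - real v / n) * h v (v - 1))"
    unfolding I0_def I1_def using n
    by (intro add_mono nn_integral_uniform_unit_step_le) (auto simp: field_simps)
  also have "\<dots> = (\<Sum>v<n. ennreal ((real n - 1 - real v) / (real n * (real n - 1))) * h v v
                    + ennreal (real v / (real n * (real n - 1))) * h v (v - 1))"
    using n by (simp add: sum.distrib field_simps)
  finally show ?thesis .
qed

section \<open>Summation estimates\<close>

lemma sum_lessThan_real: "(\<Sum>v<k. real v) = (real k - 1) * real k / 2"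
  by (induction k) (simp_all add: field_simps)

lemma sum_lessThan_if_less:
  fixes f :: "nat \<Rightarrow> 'a::comm_monoid_add"
  assumes "k \<le> N"
  shows "(\<Sum>v<N. if v < k then f v else 0) = (\<Sum>v<k. f v)"
proof -
  have "{..<N} \<inter> {..<k} = {..<k}"
    using assms by auto
  then show ?thesis
    using sum.inter_restrict[of "{..<N}" f "{..<k}"] by simp
qed

lemma sum_lessThan_if_ge_real:
  assumes "k \<le> N"
  shows "(\<Sum>v<N. if k \<le> v then real v else 0) = (real N * (real N - 1) - real k * (real k - 1)) / 2"
  using assms by (induction N rule: dec_induct) (simp_all add: field_simps)

lemma expected_cost_sum_le:
  fixes j N :: nat
  assumes "1 \<le> j" "j \<le> N"
  shows "(\<Sum>v<N. real N - 1 + (if j \<le> v then 4 * real v else 0)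
                 + (if v < j - 1 then 4 * (real N - 1 - real v) else 0)) \<le> 4 * real N ^ 2"
proof -
  have "(\<Sum>v<N. if j \<le> v then 4 * real v else 0) = 4 * (\<Sum>v<N. if j \<le> v then real v else 0)"
    unfolding sum_distrib_left by (intro sum.cong) auto
  also have "\<dots> = 2 * (real N * (real N - 1) - real j * (real j - 1))"
    using sum_lessThan_if_ge_real[OF assms(2)] by simp
  finally have upper: "(\<Sum>v<N. if j \<le> v then 4 * real v else 0) = \<dots>" .
  have "(\<Sum>v<N. if v < j - 1 then 4 * (real N - 1 - real v) else 0)
      = (\<Sum>v<j - 1. 4 * (real N - 1 - real v))"
    using assms by (intro sum_lessThan_if_less) simp
  also have "\<dots> = 4 * (real (j - 1) * (real N - 1) - (\<Sum>v<j - 1. real v))"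
    by (simp add: sum_distrib_left[symmetric] sum_subtractf)
  also have "\<dots> = 4 * ((real j - 1) * (real N - 1) - (real j - 1) * (real j - 2) / 2)"
    using assms by (simp add: sum_lessThan_real)
  finally have lower: "(\<Sum>v<N. if v < j - 1 then 4 * (real N - 1 - real v) else 0) = \<dots>" .
  have "4 * real N ^ 2 - (real N * (real N - 1) + 2 * (real N * (real N - 1) - real j * (real j - 1))
          + 4 * ((real j - 1) * (real N - 1) - (real j - 1) * (real j - 2) / 2))
        = (real N - 2 * real j) ^ 2 + 7 * real N - 4 * real j"
    by (simp add: field_simps power2_eq_square)
  moreover have "0 \<le> (real N - 2 * real j) ^ 2"
    by simp
  moreover have "(\<Sum>v<N. real N - 1) = real N * (real N - 1)"
    by simp
  ultimately show ?thesis
    using assms unfolding sum.distrib upper lower by linarith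
qed

lemma weighted_pair_le:
  fixes c x a b b' :: real
  assumes "0 \<le> x" "x \<le> c" "0 \<le> a" "b \<le> b'"
  shows "(c - x) * (1 + a) + x * (1 + b) \<le> c + c * a + x * b'"
proof -
  have "0 \<le> x * a" "x * b \<le> x * b'"
    using assms by (simp_all add: mult_left_mono)
  then show ?thesis
    by (simp add: algebra_simps)
qed

lemma pivot_diff_sum_le:
  fixes m n :: nat
  assumes "1 \<le> m" "m + 1 \<le> n"
  shows "(\<Sum>v<n. (real n - 1 - real v) * (1 + (if v < m - 1 then 2 + 16 * real (m - 1 - v) else 0))
                 + real v * (1 + (if m \<le> v then 2 + 16 * real m else 8 * real (n - 1 - v))))
         \<le> (2 + 16 * real m) * (real n * (real n - 1))"
proof -
  let ?A = "\<lambda>v. if v < m - 1 then (real n - 1) * (2 + 16 * real (m - 1 - v)) else 0"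
  let ?B = "\<lambda>v. if m \<le> v then (2 + 16 * real m) * real v else 0"
  let ?C = "\<lambda>v. if v < m then 8 * (real n - 1) * real v else 0"
  have "(\<Sum>v<n. (real n - 1 - real v) * (1 + (if v < m - 1 then 2 + 16 * real (m - 1 - v) else 0))
                 + real v * (1 + (if m \<le> v then 2 + 16 * real m else 8 * real (n - 1 - v))))
        \<le> (\<Sum>v<n. real n - 1 + ?A v + ?B v + ?C v)"
  proof (intro sum_mono)
    fix v
    assume "v \<in> {..<n}"
    then have v: "real v \<le> real n - 1" "real (n - 1 - v) = real n - 1 - real v"
      by auto
    have "(real n - 1 - real v) * (1 + (if v < m - 1 then 2 + 16 * real (m - 1 - v) else 0))
            + real v * (1 + (if m \<le> v then 2 + 16 * real m else 8 * real (n - 1 - v)))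
          \<le> real n - 1 + (real n - 1) * (if v < m - 1 then 2 + 16 * real (m - 1 - v) else 0)
            + real v * (if m \<le> v then 2 + 16 * real m else 8 * (real n - 1))"
      by (rule weighted_pair_le) (use v in auto)
    also have "\<dots> = real n - 1 + ?A v + ?B v + ?C v"
      by (simp add: algebra_simps)
    finally show "(real n - 1 - real v) * (1 + (if v < m - 1 then 2 + 16 * real (m - 1 - v) else 0))
                 + real v * (1 + (if m \<le> v then 2 + 16 * real m else 8 * real (n - 1 - v)))
        \<le> real n - 1 + ?A v + ?B v + ?C v" .
  qed
  also have "\<dots> = real n * (real n - 1) + (real n - 1) * (2 * (real m - 1) + 8 * (real m - 1) * real m)
                  + (1 + 8 * real m) * (real n * (real n - 1) - real m * (real m - 1))
                  + 4 * (real n - 1) * (real m * (real m - 1))"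
  proof -
    have "(\<Sum>v<n. ?A v) = (real n - 1) * (\<Sum>v<m - 1. 2 + 16 * real (m - 1 - v))"
      using assms by (simp add: sum_lessThan_if_less sum_distrib_left)
    also have "(\<Sum>v<m - 1. 2 + 16 * real (m - 1 - v)) = (\<Sum>v<m - 1. 2 + 16 * (real m - 1) - 16 * real v)"
      by (intro sum.cong) auto
    also have "\<dots> = real (m - 1) * (2 + 16 * (real m - 1)) - 16 * (\<Sum>v<m - 1. real v)"
      by (simp only: sum_subtractf sum_distrib_left) simp
    also have "\<dots> = 2 * (real m - 1) + 8 * (real m - 1) * real m"
      using assms by (simp add: sum_lessThan_real field_simps)
    finally have A: "(\<Sum>v<n. ?A v) = (real n - 1) * (2 * (real m - 1) + 8 * (real m - 1) * real m)" .
    have "(\<Sum>v<n. ?B v) = (2 + 16 * real m) * (\<Sum>v<n. if m \<le> v then real v else 0)"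
      unfolding sum_distrib_left by (intro sum.cong) auto
    then have B: "(\<Sum>v<n. ?B v) = (1 + 8 * real m) * (real n * (real n - 1) - real m * (real m - 1))"
      using assms by (simp add: sum_lessThan_if_ge_real) (simp add: field_simps)
    have "(\<Sum>v<n. ?C v) = 8 * (real n - 1) * (\<Sum>v<m. real v)"
      using assms by (simp add: sum_lessThan_if_less sum_distrib_left)
    then have C: "(\<Sum>v<n. ?C v) = 4 * (real n - 1) * (real m * (real m - 1))"
      by (simp add: sum_lessThan_real) (simp add: field_simps)
    show ?thesis
      unfolding sum.distrib A B C by simp
  qed
  also have "\<dots> \<le> (2 + 16 * real m) * (real n * (real n - 1))"
  proof -
    define a where "a = real n - 1 - real m"
    have "0 \<le> a" "1 \<le> real m"
      using assms by (auto simp: a_def)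
    then have "0 \<le> a * (8 * real m * a + 4 * real m ^ 2 + 18 * real m + 2) + 4 * real m ^ 3 + 11 * real m ^ 2 + real m"
      by simp
    moreover have "(2 + 16 * real m) * (real n * (real n - 1))
        - (real n * (real n - 1) + (real n - 1) * (2 * (real m - 1) + 8 * (real m - 1) * real m)
           + (1 + 8 * real m) * (real n * (real n - 1) - real m * (real m - 1))
           + 4 * (real n - 1) * (real m * (real m - 1)))
        = a * (8 * real m * a + 4 * real m ^ 2 + 18 * real m + 2) + 4 * real m ^ 3 + 11 * real m ^ 2 + real m"
      by (simp add: a_def algebra_simps power2_eq_square power3_eq_cube)
    ultimately show ?thesis
      by linarith
  qed
  finally show ?thesis .
qed

section \<open>Expected costs and their increments\<close>

lemma ennreal_sum_mult:
  assumes "\<And>i. i \<in> I \<Longrightarrow> 0 \<le> p i" "\<And>i. i \<in> I \<Longrightarrow> 0 \<le> a i"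
  shows "(\<Sum>i\<in>I. ennreal (p i) * ennreal (a i)) = ennreal (\<Sum>i\<in>I. p i * a i)"
  using assms by (simp add: ennreal_mult[symmetric])

lemma ennreal_mult_add_mult:
  assumes "0 \<le> p" "0 \<le> a" "0 \<le> q" "0 \<le> b"
  shows "ennreal p * ennreal a + ennreal q * ennreal b = ennreal (p * a + q * b)"
  using assms by (simp add: ennreal_mult)

lemma nn_integral_unif_seq_one_plus:
  assumes [measurable]: "f \<in> borel_measurable unif_seq" and "\<And>u. 0 \<le> f u"
  shows "(\<integral>\<^sup>+u. ennreal (1 + f u) \<partial>unif_seq) = 1 + (\<integral>\<^sup>+u. ennreal (f u) \<partial>unif_seq)"
proof -
  interpret prob_space unif_seq
    by (rule prob_space_unif_seq)
  have "(\<integral>\<^sup>+u. ennreal (1 + f u) \<partial>unif_seq) = (\<integral>\<^sup>+u. 1 + ennreal (f u) \<partial>unif_seq)"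
    using assms by simp
  also have "\<dots> = 1 + (\<integral>\<^sup>+u. ennreal (f u) \<partial>unif_seq)"
    by (subst nn_integral_add) (simp_all add: emeasure_space_1)
  finally show ?thesis .
qed

lemma nn_integral_qsel_cmp_pivot:
  "(\<integral>\<^sup>+w. of_nat (qsel_cmp_pivot m n v w) \<partial>unif_seq)
     = of_nat (n - 1) + (\<integral>\<^sup>+w. of_nat (qsel_cmp m v w) \<partial>unif_seq)
       + (if v < m - 1 then \<integral>\<^sup>+w. of_nat (qsel_cmp (m - 1 - v) (n - 1 - v) w) \<partial>unif_seq else 0)"
proof -
  interpret prob_space unif_seq
    by (rule prob_space_unif_seq)
  show ?thesis
    by (cases "v < m - 1") (simp_all add: qsel_cmp_pivot_def nn_integral_add emeasure_space_1)
qed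

lemma nn_integral_qsel_cmp_pivot_le:
  assumes "1 \<le> j" "j \<le> N" "v < N"
    and IH: "\<And>N' j'. N' < N \<Longrightarrow> (\<integral>\<^sup>+u. of_nat (qsel_cmp j' N' u) \<partial>unif_seq) \<le> ennreal (4 * real N')"
  shows "(\<integral>\<^sup>+w. of_nat (qsel_cmp_pivot j N v w) \<partial>unif_seq)
           \<le> ennreal (real N - 1 + (if j \<le> v then 4 * real v else 0)
                      + (if v < j - 1 then 4 * (real N - 1 - real v) else 0))"
proof -
  have "(\<integral>\<^sup>+w. of_nat (qsel_cmp j v w) \<partial>unif_seq) \<le> ennreal (if j \<le> v then 4 * real v else 0)"
    using IH[OF assms(3), of j] by (auto simp: qsel_cmp_trivial)
  moreover have "(if v < j - 1 then \<integral>\<^sup>+w. of_nat (qsel_cmp (j - 1 - v) (N - 1 - v) w) \<partial>unif_seq else 0)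
                   \<le> ennreal (if v < j - 1 then 4 * (real N - 1 - real v) else 0)"
    using IH[of "N - 1 - v" "j - 1 - v"] assms(3) by (auto simp: algebra_simps)
  moreover have "of_nat (N - 1) = ennreal (real N - 1)"
    using assms by (simp add: ennreal_of_nat_eq_real_of_nat)
  ultimately have "(\<integral>\<^sup>+w. of_nat (qsel_cmp_pivot j N v w) \<partial>unif_seq)
      \<le> ennreal (real N - 1) + ennreal (if j \<le> v then 4 * real v else 0)
         + ennreal (if v < j - 1 then 4 * (real N - 1 - real v) else 0)"
    unfolding nn_integral_qsel_cmp_pivot by (intro add_mono) simp_all
  also have "\<dots> = ennreal (real N - 1 + (if j \<le> v then 4 * real v else 0)
                           + (if v < j - 1 then 4 * (real N - 1 - real v) else 0))"
    using assms
    by (cases "j \<le> v"; cases "v < j - 1") (simp_all add: ennreal_plus[symmetric] del: ennreal_plus)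
  finally show ?thesis .
qed

lemma nn_integral_qsel_cmp_le:
  "(\<integral>\<^sup>+u. of_nat (qsel_cmp j N u) \<partial>unif_seq) \<le> ennreal (4 * real N)"
proof (induction N arbitrary: j rule: less_induct)
  case (less N)
  show ?case
  proof (cases "N < j \<or> j = 0")
    case True
    then show ?thesis
      by (simp add: qsel_cmp_trivial)
  next
    case False
    then have j: "1 \<le> j" "j \<le> N"
      by auto
    define r where "r v = real N - 1 + (if j \<le> v then 4 * real v else 0)
                          + (if v < j - 1 then 4 * (real N - 1 - real v) else 0)" for v
    have "(\<integral>\<^sup>+u. of_nat (qsel_cmp j N u) \<partial>unif_seq)
            = (\<integral>\<^sup>+x. \<integral>\<^sup>+w. of_nat (qsel_cmp_pivot j N (pivot_rank N x) w) \<partial>unif_seq \<partial>uniform_unit)"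
      using j by (simp add: nn_integral_unif_seq_case_nat qsel_cmp_case_nat)
    also have "\<dots> \<le> (\<Sum>v<N. ennreal (1 / real N) * (\<integral>\<^sup>+w. of_nat (qsel_cmp_pivot j N v w) \<partial>unif_seq))"
      using j by (intro nn_integral_pivot_rank_le) simp
    also have "\<dots> \<le> (\<Sum>v<N. ennreal (1 / real N) * ennreal (r v))"
      unfolding r_def using j less.IH
      by (intro sum_mono mult_left_mono nn_integral_qsel_cmp_pivot_le) auto
    also have "\<dots> = ennreal (\<Sum>v<N. 1 / real N * r v)"
      by (intro ennreal_sum_mult) (auto simp: r_def)
    also have "\<dots> = ennreal ((\<Sum>v<N. r v) / real N)"
      by (simp add: sum_divide_distrib)
    also have "\<dots> \<le> ennreal (4 * real N)"
      using expected_cost_sum_le[OF j] j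
      by (intro ennreal_leI) (simp add: r_def divide_le_eq power2_eq_square)
    finally show ?thesis .
  qed
qed

lemma qsel_cmp_pivot_same_diff:
  assumes "2 \<le> n"
  shows "real (qsel_cmp_pivot m n v w) - real (qsel_cmp_pivot m (n - 1) v w)
           = 1 + (if v < m - 1 then real (qsel_cmp (m - 1 - v) (n - 1 - v) w)
                                   - real (qsel_cmp (m - 1 - v) (n - 1 - v - 1) w) else 0)"
  using assms by (simp add: qsel_cmp_pivot_def)

lemma qsel_cmp_pivot_shift_diff_le:
  assumes "1 \<le> v" "v < n"
  shows "\<bar>real (qsel_cmp_pivot m n v w) - real (qsel_cmp_pivot m (n - 1) (v - 1) w)\<bar>
           \<le> 1 + (if m \<le> v then \<bar>real (qsel_cmp m v w) - real (qsel_cmp m (v - 1) w)\<bar>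
                  else real (qsel_cmp (m - 1 - v) (n - 1 - v) w + qsel_cmp (m - v) (n - 1 - v) w))"
proof (cases "m \<le> v")
  case True
  then show ?thesis
    using assms by (simp add: qsel_cmp_pivot_def) arith
next
  case False
  then have "qsel_cmp m v w = 0" "qsel_cmp m (v - 1) w = 0" "m - 1 - (v - 1) = m - v"
    "n - 1 - 1 - (v - 1) = n - 1 - v"
    using assms by (auto simp: qsel_cmp_trivial)
  then show ?thesis
    using assms False by (simp add: qsel_cmp_pivot_def) arith
qed

lemma nn_integral_pivot_same_diff_le:
  assumes "2 \<le> n"
    and IH: "v < m - 1 \<Longrightarrow>
      (\<integral>\<^sup>+u. ennreal \<bar>real (qsel_cmp (m - 1 - v) (n - 1 - v) u)
                       - real (qsel_cmp (m - 1 - v) (n - 1 - v - 1) u)\<bar> \<partial>unif_seq)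
        \<le> ennreal (2 + 16 * real (m - 1 - v))"
  shows "(\<integral>\<^sup>+w. ennreal \<bar>real (qsel_cmp_pivot m n v w) - real (qsel_cmp_pivot m (n - 1) v w)\<bar> \<partial>unif_seq)
           \<le> ennreal (1 + (if v < m - 1 then 2 + 16 * real (m - 1 - v) else 0))"
proof (cases "v < m - 1")
  case True
  have "(\<integral>\<^sup>+w. ennreal \<bar>real (qsel_cmp_pivot m n v w) - real (qsel_cmp_pivot m (n - 1) v w)\<bar> \<partial>unif_seq)
      \<le> (\<integral>\<^sup>+w. ennreal (1 + \<bar>real (qsel_cmp (m - 1 - v) (n - 1 - v) w)
                                 - real (qsel_cmp (m - 1 - v) (n - 1 - v - 1) w)\<bar>) \<partial>unif_seq)"
    unfolding qsel_cmp_pivot_same_diff[OF assms(1)] using True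
    by (intro nn_integral_mono ennreal_leI) (simp; arith)
  also have "\<dots> \<le> 1 + ennreal (2 + 16 * real (m - 1 - v))"
    using IH[OF True] by (subst nn_integral_unif_seq_one_plus) (auto intro: add_mono)
  also have "\<dots> = ennreal (1 + (if v < m - 1 then 2 + 16 * real (m - 1 - v) else 0))"
    using True by (simp del: of_nat_diff)
  finally show ?thesis .
next
  case False
  then show ?thesis
    unfolding qsel_cmp_pivot_same_diff[OF assms(1)]
    by (simp add: prob_space.emeasure_space_1[OF prob_space_unif_seq])
qed

lemma nn_integral_pivot_shift_diff_le:
  assumes "1 \<le> v" "v < n"
    and IH: "m \<le> v \<Longrightarrow>
      (\<integral>\<^sup>+u. ennreal \<bar>real (qsel_cmp m v u) - real (qsel_cmp m (v - 1) u)\<bar> \<partial>unif_seq)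
        \<le> ennreal (2 + 16 * real m)"
  shows "(\<integral>\<^sup>+w. ennreal \<bar>real (qsel_cmp_pivot m n v w) - real (qsel_cmp_pivot m (n - 1) (v - 1) w)\<bar>
            \<partial>unif_seq)
           \<le> ennreal (1 + (if m \<le> v then 2 + 16 * real m else 8 * real (n - 1 - v)))"
proof -
  let ?bound = "\<lambda>w. if m \<le> v then \<bar>real (qsel_cmp m v w) - real (qsel_cmp m (v - 1) w)\<bar>
                     else real (qsel_cmp (m - 1 - v) (n - 1 - v) w + qsel_cmp (m - v) (n - 1 - v) w)"
  have "(\<integral>\<^sup>+w. ennreal \<bar>real (qsel_cmp_pivot m n v w) - real (qsel_cmp_pivot m (n - 1) (v - 1) w)\<bar>
            \<partial>unif_seq) \<le> (\<integral>\<^sup>+w. ennreal (1 + ?bound w) \<partial>unif_seq)"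
    using assms(1,2) by (intro nn_integral_mono ennreal_leI qsel_cmp_pivot_shift_diff_le)
  also have "\<dots> = 1 + (\<integral>\<^sup>+w. ennreal (?bound w) \<partial>unif_seq)"
    by (rule nn_integral_unif_seq_one_plus) auto
  also have "(\<integral>\<^sup>+w. ennreal (?bound w) \<partial>unif_seq)
      \<le> ennreal (if m \<le> v then 2 + 16 * real m else 8 * real (n - 1 - v))"
  proof (cases "m \<le> v")
    case True
    then show ?thesis
      using IH by simp
  next
    case False
    have "(\<integral>\<^sup>+w. ennreal (?bound w) \<partial>unif_seq)
        = (\<integral>\<^sup>+w. of_nat (qsel_cmp (m - 1 - v) (n - 1 - v) w) \<partial>unif_seq)
          + (\<integral>\<^sup>+w. of_nat (qsel_cmp (m - v) (n - 1 - v) w) \<partial>unif_seq)"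
      using False by (simp add: nn_integral_add flip: ennreal_of_nat_eq_real_of_nat)
    also have "\<dots> \<le> ennreal (4 * real (n - 1 - v)) + ennreal (4 * real (n - 1 - v))"
      by (intro add_mono nn_integral_qsel_cmp_le)
    finally show ?thesis
      using False by (simp add: ennreal_plus[symmetric] del: ennreal_plus)
  qed
  finally show ?thesis
    by (simp del: of_nat_diff)
qed

lemma pivot_diff_weighted_sum_le:
  fixes m n :: nat
  assumes "1 \<le> m" "m + 1 \<le> n"
  shows "(\<Sum>v<n. ennreal ((real n - 1 - real v) / (real n * (real n - 1)))
                   * ennreal (1 + (if v < m - 1 then 2 + 16 * real (m - 1 - v) else 0))
                 + ennreal (real v / (real n * (real n - 1)))
                   * ennreal (1 + (if m \<le> v then 2 + 16 * real m else 8 * real (n - 1 - v))))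
         \<le> ennreal (2 + 16 * real m)"
proof -
  define a where "a v = 1 + (if v < m - 1 then 2 + 16 * real (m - 1 - v) else 0)" for v
  define b where "b v = 1 + (if m \<le> v then 2 + 16 * real m else 8 * real (n - 1 - v))" for v
  define d where "d = real n * (real n - 1)"
  have "0 < d"
    using assms by (simp add: d_def)
  then have nonneg: "0 \<le> (real n - 1 - real v) / d" "0 \<le> real v / d" "0 \<le> a v" "0 \<le> b v"
    if "v \<in> {..<n}" for v
    using that by (auto simp: a_def b_def)
  have "(\<Sum>v<n. ennreal ((real n - 1 - real v) / d) * ennreal (a v) + ennreal (real v / d) * ennreal (b v))
      = (\<Sum>v<n. ennreal ((real n - 1 - real v) / d * a v + real v / d * b v))"
    by (rule sum.cong[OF refl], rule ennreal_mult_add_mult) (use nonneg in blast)+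
  also have "\<dots> = ennreal (\<Sum>v<n. (real n - 1 - real v) / d * a v + real v / d * b v)"
    using nonneg by (intro sum_ennreal add_nonneg_nonneg mult_nonneg_nonneg)
  also have "\<dots> = ennreal ((\<Sum>v<n. (real n - 1 - real v) * a v + real v * b v) / d)"
    by (simp add: sum_divide_distrib add_divide_distrib)
  also have "\<dots> \<le> ennreal (2 + 16 * real m)"
    using pivot_diff_sum_le[OF assms] \<open>0 < d\<close>
    by (intro ennreal_leI) (simp add: a_def b_def d_def divide_le_eq)
  finally show ?thesis
    by (simp only: a_def b_def d_def)
qed

lemma nn_integral_qsel_cmp_diff_step:
  assumes "1 \<le> m" "m + 1 \<le> n"
    and IH: "\<And>n' j. n' < n \<Longrightarrow> 1 \<le> j \<Longrightarrow>
      (\<integral>\<^sup>+u. ennreal \<bar>real (qsel_cmp j n' u) - real (qsel_cmp j (n' - 1) u)\<bar> \<partial>unif_seq)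
        \<le> ennreal (2 + 16 * real j)"
  shows "(\<integral>\<^sup>+u. ennreal \<bar>real (qsel_cmp m n u) - real (qsel_cmp m (n - 1) u)\<bar> \<partial>unif_seq)
           \<le> ennreal (2 + 16 * real m)"
proof -
  define h where "h v v' = (\<integral>\<^sup>+w. ennreal \<bar>real (qsel_cmp_pivot m n v w)
                                      - real (qsel_cmp_pivot m (n - 1) v' w)\<bar> \<partial>unif_seq)" for v v'
  define p0 where "p0 v = ennreal ((real n - 1 - real v) / (real n * (real n - 1)))" for v
  define p1 where "p1 v = ennreal (real v / (real n * (real n - 1)))" for v
  have n: "2 \<le> n"
    using assms by simp
  have same: "h v v \<le> ennreal (1 + (if v < m - 1 then 2 + 16 * real (m - 1 - v) else 0))" for v
    unfolding h_def using n
  proof (rule nn_integral_pivot_same_diff_le)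
    assume "v < m - 1"
    then show "(\<integral>\<^sup>+u. ennreal \<bar>real (qsel_cmp (m - 1 - v) (n - 1 - v) u)
                   - real (qsel_cmp (m - 1 - v) (n - 1 - v - 1) u)\<bar> \<partial>unif_seq)
             \<le> ennreal (2 + 16 * real (m - 1 - v))"
      using n by (intro IH) auto
  qed
  have shift: "h v (v - 1) \<le> ennreal (1 + (if m \<le> v then 2 + 16 * real m else 8 * real (n - 1 - v)))"
    if "1 \<le> v" "v < n" for v
    unfolding h_def using that
  proof (rule nn_integral_pivot_shift_diff_le)
    assume "m \<le> v"
    then show "(\<integral>\<^sup>+u. ennreal \<bar>real (qsel_cmp m v u) - real (qsel_cmp m (v - 1) u)\<bar> \<partial>unif_seq)
               \<le> ennreal (2 + 16 * real m)"
      using assms(1) that by (intro IH) auto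
  qed
  have "(\<integral>\<^sup>+u. ennreal \<bar>real (qsel_cmp m n u) - real (qsel_cmp m (n - 1) u)\<bar> \<partial>unif_seq)
      = (\<integral>\<^sup>+x. h (pivot_rank n x) (pivot_rank (n - 1) x) \<partial>uniform_unit)"
    using assms by (simp add: h_def nn_integral_unif_seq_case_nat qsel_cmp_case_nat)
  also have "\<dots> \<le> (\<Sum>v<n. p0 v * h v v + p1 v * h v (v - 1))"
    unfolding p0_def p1_def by (rule nn_integral_pivot_rank_pair_le[OF n])
  also have "\<dots> \<le> (\<Sum>v<n. p0 v * ennreal (1 + (if v < m - 1 then 2 + 16 * real (m - 1 - v) else 0))
                        + p1 v * ennreal (1 + (if m \<le> v then 2 + 16 * real m else 8 * real (n - 1 - v))))"
  proof (rule sum_mono)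
    fix v
    assume v: "v \<in> {..<n}"
    have "p0 v * h v v \<le> p0 v * ennreal (1 + (if v < m - 1 then 2 + 16 * real (m - 1 - v) else 0))"
      using same by (rule mult_left_mono) simp
    moreover have "p1 v * h v (v - 1)
        \<le> p1 v * ennreal (1 + (if m \<le> v then 2 + 16 * real m else 8 * real (n - 1 - v)))"
    proof (cases "v = 0")
      case True
      then show ?thesis
        by (simp add: p1_def)
    next
      case False
      then show ?thesis
        using shift[of v] v by (intro mult_left_mono) simp_all
    qed
    ultimately show "p0 v * h v v + p1 v * h v (v - 1)
        \<le> p0 v * ennreal (1 + (if v < m - 1 then 2 + 16 * real (m - 1 - v) else 0))
          + p1 v * ennreal (1 + (if m \<le> v then 2 + 16 * real m else 8 * real (n - 1 - v)))"
      by (rule add_mono)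
  qed
  also have "\<dots> \<le> ennreal (2 + 16 * real m)"
    unfolding p0_def p1_def by (rule pivot_diff_weighted_sum_le[OF assms(1,2)])
  finally show ?thesis .
qed

lemma nn_integral_qsel_cmp_diff_le:
  assumes "1 \<le> m"
  shows "(\<integral>\<^sup>+u. ennreal \<bar>real (qsel_cmp m n u) - real (qsel_cmp m (n - 1) u)\<bar> \<partial>unif_seq)
           \<le> ennreal (2 + 16 * real m)"
  using assms
proof (induction n arbitrary: m rule: less_induct)
  case (less n)
  consider "n < m" | "n = m" | "m + 1 \<le> n"
    by linarith
  then show ?case
  proof cases
    case 1
    then show ?thesis
      by (simp add: qsel_cmp_trivial)
  next
    case 2
    then have "(\<integral>\<^sup>+u. ennreal \<bar>real (qsel_cmp m n u) - real (qsel_cmp m (n - 1) u)\<bar> \<partial>unif_seq)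
        = (\<integral>\<^sup>+u. of_nat (qsel_cmp m n u) \<partial>unif_seq)"
      using less.prems by (simp add: qsel_cmp_trivial ennreal_of_nat_eq_real_of_nat)
    also have "\<dots> \<le> ennreal (4 * real n)"
      by (rule nn_integral_qsel_cmp_le)
    also have "\<dots> \<le> ennreal (2 + 16 * real m)"
      using 2 by (intro ennreal_leI) simp
    finally show ?thesis .
  next
    case 3
    then show ?thesis
      by (rule nn_integral_qsel_cmp_diff_step[OF less.prems _ less.IH])
  qed
qed

theorem lemma2p6:
  fixes m p :: nat
  assumes "m \<ge> 2" and "p \<ge> 1"
  shows "(\<integral>\<^sup>+ u. ennreal \<bar>real (qsel_cmp m p u) - real (qsel_cmp m (p - 1) u)\<bar> \<partial>unif_seq)
           \<le> ennreal (2 + 16 * real m)"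
  using assms(1) by (intro nn_integral_qsel_cmp_diff_le) simp

end
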